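(* There is a Borel function $f:(\omega^\omega)^3\to\omega^\omega$ which has no superperfect free subset.
   Context: A tree $T\subseteq\omega^{<\omega}$ is superperfect if for every $\sigma\in T$ there is $\tau\supseteq\sigma$ in $T$ such that $\tau^\frown\langle n\rangle\in T$ for infinitely many $n$; a superperfect set is a set of the form $[T]$ (the infinite branches of $T$) for a superperfect tree $T$. A set $A\subseteq\omega^\omega$ is free for $f:(\omega^\omega)^3\to\omega^\omega$ if for all $(a_0,a_1,a_2)\in A^3$, $f(a_0,a_1,a_2)\in\{a_0,a_1,a_2\}\cup(\omega^\omega\setminus A)$. *)

theory Defs
  imports "HOL-Analysis.Analysis" "HOL-Library.Sublist"
begin

text \<open>Baire space is \<open>nat \<Rightarrow> nat\<close> with the product topology of discrete \<open>nat\<close>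
  (library instance of \<open>topological_space\<close> on function types);
  \<open>\<omega>\<^sup><\<^sup>\<omega>\<close> is \<open>nat list\<close>, and extension of finite sequences is \<open>prefix\<close>.\<close>

definition is_tree :: "nat list set \<Rightarrow> bool" where
  "is_tree T \<longleftrightarrow> T \<noteq> {} \<and> (\<forall>\<sigma>\<in>T. \<forall>\<rho>. prefix \<rho> \<sigma> \<longrightarrow> \<rho> \<in> T)"

definition superperfect_tree :: "nat list set \<Rightarrow> bool" where
  "superperfect_tree T \<longleftrightarrow> is_tree T \<and>
     (\<forall>\<sigma>\<in>T. \<exists>\<tau>\<in>T. prefix \<sigma> \<tau> \<and> infinite {n. \<tau> @ [n] \<in> T})"

definition branches :: "nat list set \<Rightarrow> (nat \<Rightarrow> nat) set" where
  "branches T = {x. \<forall>n. map x [0..<n] \<in> T}"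

definition superperfect_set :: "(nat \<Rightarrow> nat) set \<Rightarrow> bool" where
  "superperfect_set A \<longleftrightarrow> (\<exists>T. superperfect_tree T \<and> A = branches T)"

definition free_for :: "(nat \<Rightarrow> nat) set \<Rightarrow>
    ((nat \<Rightarrow> nat) \<times> (nat \<Rightarrow> nat) \<times> (nat \<Rightarrow> nat) \<Rightarrow> (nat \<Rightarrow> nat)) \<Rightarrow> bool" where
  "free_for A f \<longleftrightarrow> (\<forall>a0\<in>A. \<forall>a1\<in>A. \<forall>a2\<in>A.
      f (a0, a1, a2) \<in> {a0, a1, a2} \<union> (UNIV - A))"

end

theory Submission
  imports Defs
begin

text \<open>Let \<open>T\<close> be a superperfect tree and \<open>a\<close> a branch of \<open>T\<close>. We build three further
  branches \<open>x\<close>, \<open>y\<close>, \<open>z\<close> of \<open>T\<close>, all different from \<open>a\<close>, from which a fixed Borel decoder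
  recovers \<open>a\<close>; so \<open>[T]\<close> is not free for the decoder. The branches grow in rounds: in each
  round \<open>x\<close>, \<open>y\<close> and \<open>z\<close> in turn pass a splitting node of \<open>T\<close> and take there a value
  larger than every value used so far, \<open>x\<close> first and then \<open>y\<close> and \<open>z\<close> in an order that
  encodes one bit of the graph of \<open>a\<close> (the later of the two gets the larger value). The
  decoder finds these positions without knowing \<open>T\<close>: the next choice of \<open>x\<close> is the first
  later position where \<open>x\<close> exceeds the last values chosen for \<open>y\<close> and \<open>z\<close>, and the next
  choices of \<open>y\<close> and \<open>z\<close> are the first later positions where they exceed that value of \<open>x\<close>.\<close>

type_synonym baire = "nat \<Rightarrow> nat"

lemma measurable_borel_nat_iff:
  "f \<in> M \<rightarrow>\<^sub>M (borel :: nat measure) \<longleftrightarrow> f \<in> M \<rightarrow>\<^sub>M count_space UNIV"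
  by (simp add: measurable_cong_sets[OF refl sets_borel_eq_count_space])

lemma measurable_baire_coordinate[measurable]: "(\<lambda>x::baire. x n) \<in> borel \<rightarrow>\<^sub>M count_space UNIV"
  by (rule measurable_borel_nat_iff[THEN iffD1, OF measurable_product_coordinates])

lemma measurable_count_space_binop:
  fixes f :: "'a \<Rightarrow> 'b::countable" and g :: "'a \<Rightarrow> 'c::countable"
  assumes "f \<in> M \<rightarrow>\<^sub>M count_space UNIV" "g \<in> M \<rightarrow>\<^sub>M count_space UNIV"
  shows "(\<lambda>w. h (f w) (g w)) \<in> M \<rightarrow>\<^sub>M (count_space UNIV :: 'd measure)"
  by (rule measurable_compose_countable[where f="\<lambda>i w. h i (g w)",
        OF measurable_compose[OF assms(2) measurable_count_space] assms(1)])

lemma measurable_baire_eval: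
  fixes x :: "'a \<Rightarrow> baire"
  assumes "x \<in> M \<rightarrow>\<^sub>M borel" "i \<in> M \<rightarrow>\<^sub>M count_space UNIV"
  shows "(\<lambda>w. x w (i w)) \<in> M \<rightarrow>\<^sub>M count_space UNIV"
  by (rule measurable_compose_countable[where f="\<lambda>n w. x w n",
        OF measurable_compose[OF assms(1) measurable_baire_coordinate] assms(2)])

lemma Least_first_above:
  fixes f :: "nat \<Rightarrow> 'a::linorder"
  assumes "l < p" "c < f p" "\<And>n. l < n \<Longrightarrow> n < p \<Longrightarrow> f n \<le> c"
  shows "(LEAST n. l < n \<and> c < f n) = p"
proof (rule Least_equality)
  show "l < p \<and> c < f p"
    using assms(1,2) by simp
  show "p \<le> m" if "l < m \<and> c < f m" for m
    using that assms(3)[of m] by (meson leD not_le_imp_less)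
qed

lemma prefix_nth: "prefix xs ys \<Longrightarrow> n < length xs \<Longrightarrow> ys ! n = xs ! n"
  by (auto simp: prefix_def nth_append)

definition chain_limit :: "(nat \<Rightarrow> 'a list) \<Rightarrow> nat \<Rightarrow> 'a" where
  "chain_limit L n = L (Suc n) ! n"

lemma strict_prefix_chain_length:
  assumes "\<And>q. strict_prefix (L q) (L (Suc q))"
  shows "q \<le> length (L q)"
proof (induction q)
  case (Suc q)
  then show ?case
    using prefix_length_less[OF assms[of q]] by simp
qed simp

lemma chain_limit_nth:
  assumes chain: "\<And>q. strict_prefix (L q) (L (Suc q))" and n: "n < length (L k)"
  shows "chain_limit L n = L k ! n"
proof -
  have step: "prefix (L q) (L (Suc q))" for q
    using chain[of q] by (rule prefix_order.less_imp_le)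
  have mono: "prefix (L i) (L j)" if "i \<le> j" for i j
    using step that by (rule prefix_order.lift_Suc_mono_le)
  show ?thesis
  proof (cases "Suc n \<le> k")
    case True
    have "n < length (L (Suc n))"
      using strict_prefix_chain_length[of L "Suc n", OF chain] by simp
    then show ?thesis
      unfolding chain_limit_def by (rule prefix_nth[OF mono[OF True], symmetric])
  next
    case False
    then have "k \<le> Suc n"
      by simp
    then show ?thesis
      unfolding chain_limit_def by (rule prefix_nth[OF mono n])
  qed
qed

lemma chain_limit_in_branches:
  assumes "is_tree T" and chain: "\<And>q. strict_prefix (L q) (L (Suc q))" and "\<And>q. L q \<in> T"
  shows "chain_limit L \<in> branches T"
  unfolding branches_def
proof (intro CollectI allI)
  fix n
  have "n \<le> length (L n)"
    using chain by (rule strict_prefix_chain_length)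
  then have "map (chain_limit L) [0..<n] = take n (L n)"
    using chain_limit_nth[of L _ n, OF chain] by (intro nth_equalityI) simp_all
  moreover have "take n (L n) \<in> T"
    using assms(1) assms(3)[of n] take_is_prefix[of n "L n"] unfolding is_tree_def by blast
  ultimately show "map (chain_limit L) [0..<n] \<in> T"
    by simp
qed

definition splitting_node :: "nat list set \<Rightarrow> nat list \<Rightarrow> bool" where
  "splitting_node T \<sigma> \<longleftrightarrow> \<sigma> \<in> T \<and> infinite {n. \<sigma> @ [n] \<in> T}"

lemma is_tree_Nil: "is_tree T \<Longrightarrow> [] \<in> T"
  unfolding is_tree_def by (metis all_not_in_conv prefix_bot.extremum)

lemma superperfect_tree_ex_splitting_node:
  assumes "superperfect_tree T"
  obtains s where "splitting_node T s"
  using assms is_tree_Nil unfolding superperfect_tree_def splitting_node_def by blast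

definition next_splitting :: "nat list set \<Rightarrow> nat list \<Rightarrow> nat list" where
  "next_splitting T \<sigma> = (SOME \<tau>. splitting_node T \<tau> \<and> prefix \<sigma> \<tau>)"

lemma next_splitting:
  assumes "superperfect_tree T" "\<sigma> \<in> T"
  shows "splitting_node T (next_splitting T \<sigma>) \<and> prefix \<sigma> (next_splitting T \<sigma>)"
proof -
  have "\<exists>\<tau>. splitting_node T \<tau> \<and> prefix \<sigma> \<tau>"
    using assms unfolding superperfect_tree_def splitting_node_def by blast
  then show ?thesis
    unfolding next_splitting_def by (rule someI_ex)
qed

definition jump :: "nat list set \<Rightarrow> nat list \<Rightarrow> nat \<Rightarrow> nat list" where
  "jump T \<sigma> B = next_splitting T (\<sigma> @ [SOME v. \<sigma> @ [v] \<in> T \<and> B < v])"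

lemma jump:
  assumes "superperfect_tree T" "splitting_node T \<sigma>"
  shows "splitting_node T (jump T \<sigma> B)" "strict_prefix \<sigma> (jump T \<sigma> B)" "B < jump T \<sigma> B ! length \<sigma>"
proof -
  define v where "v = (SOME v. \<sigma> @ [v] \<in> T \<and> B < v)"
  have "\<exists>v. \<sigma> @ [v] \<in> T \<and> B < v"
    using assms(2) unfolding splitting_node_def infinite_nat_iff_unbounded by auto
  then have v: "\<sigma> @ [v] \<in> T \<and> B < v"
    unfolding v_def by (rule someI_ex)
  then have nxt: "splitting_node T (jump T \<sigma> B) \<and> prefix (\<sigma> @ [v]) (jump T \<sigma> B)"
    using next_splitting[OF assms(1)] unfolding jump_def v_def by simp
  then show "splitting_node T (jump T \<sigma> B)"
    by simp
  from nxt have ext: "prefix (\<sigma> @ [v]) (jump T \<sigma> B)"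
    by simp
  show "strict_prefix \<sigma> (jump T \<sigma> B)"
    using ext by (rule prefix_order.less_le_trans[rotated]) (simp add: strict_prefix_def)
  show "B < jump T \<sigma> B ! length \<sigma>"
    using v prefix_nth[OF ext] by simp
qed

text \<open>Positions of the last choices found in \<open>x\<close>, \<open>y\<close>, \<open>z\<close>, and the larger of the last
  values of \<open>y\<close> and \<open>z\<close>.\<close>

type_synonym decoder_state = "nat \<times> nat \<times> nat \<times> nat"

definition decode_init :: "baire \<Rightarrow> baire \<Rightarrow> decoder_state" where
  "decode_init y z = (let d = LEAST n. y n \<noteq> z n in (d, d, d, max (y d) (z d)))"

definition decode_step :: "baire \<Rightarrow> baire \<Rightarrow> baire \<Rightarrow> decoder_state \<Rightarrow> decoder_state" where
  "decode_step x y z = (\<lambda>(lx, ly, lz, t).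
     let px = LEAST n. lx < n \<and> t < x n;
         py = LEAST n. ly < n \<and> x px < y n;
         pz = LEAST n. lz < n \<and> x px < z n
     in (px, py, pz, max (y py) (z pz)))"

primrec decode_state :: "baire \<Rightarrow> baire \<Rightarrow> baire \<Rightarrow> nat \<Rightarrow> decoder_state" where
  "decode_state x y z 0 = decode_init y z"
| "decode_state x y z (Suc q) = decode_step x y z (decode_state x y z q)"

definition decode_bit :: "baire \<Rightarrow> baire \<Rightarrow> baire \<Rightarrow> nat \<Rightarrow> bool" where
  "decode_bit x y z q = (let (_, py, pz, _) = decode_state x y z q in y py < z pz)"

definition decode :: "baire \<times> baire \<times> baire \<Rightarrow> baire" where
  "decode = (\<lambda>(x, y, z) k. LEAST i. decode_bit x y z (prod_encode (k, i)))"

definition graph_code :: "baire \<Rightarrow> nat \<Rightarrow> bool" where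
  "graph_code a j \<longleftrightarrow> snd (prod_decode j) = a (fst (prod_decode j))"

lemma decode_eq_if_graph_code:
  assumes "decode_bit x y z = graph_code a"
  shows "decode (x, y, z) = a"
  using assms by (auto simp: decode_def graph_code_def intro: Least_equality)

lemma measurable_decode_init:
  assumes "y \<in> M \<rightarrow>\<^sub>M borel" "z \<in> M \<rightarrow>\<^sub>M borel"
  shows "(\<lambda>w. decode_init (y w) (z w)) \<in> M \<rightarrow>\<^sub>M count_space UNIV"
proof -
  define d where "d w = (LEAST n. y w n \<noteq> z w n)" for w
  have d: "d \<in> M \<rightarrow>\<^sub>M count_space UNIV"
    unfolding d_def
    by (rule measurable_Least, rule measurable_count_space_binop[where h="(\<noteq>)"])
      (rule measurable_baire_eval[OF assms(1) measurable_count_space_const],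
       rule measurable_baire_eval[OF assms(2) measurable_count_space_const])
  have "(\<lambda>w. max (y w (d w)) (z w (d w))) \<in> M \<rightarrow>\<^sub>M count_space UNIV"
    by (rule measurable_count_space_binop[OF measurable_baire_eval[OF assms(1) d]
          measurable_baire_eval[OF assms(2) d]])
  then show ?thesis
    unfolding decode_init_def Let_def d_def[symmetric]
    by (intro measurable_count_space_binop[where h=Pair, OF d])
qed

lemma measurable_decode_step:
  assumes [measurable]: "x \<in> M \<rightarrow>\<^sub>M borel" "y \<in> M \<rightarrow>\<^sub>M borel" "z \<in> M \<rightarrow>\<^sub>M borel"
    "st \<in> M \<rightarrow>\<^sub>M count_space UNIV"
  shows "(\<lambda>w. decode_step (x w) (y w) (z w) (st w)) \<in> M \<rightarrow>\<^sub>M count_space UNIV"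
  unfolding decode_step_def Let_def by measurable

lemma measurable_decode_state:
  assumes "x \<in> M \<rightarrow>\<^sub>M borel" "y \<in> M \<rightarrow>\<^sub>M borel" "z \<in> M \<rightarrow>\<^sub>M borel"
  shows "(\<lambda>w. decode_state (x w) (y w) (z w) q) \<in> M \<rightarrow>\<^sub>M count_space UNIV"
  by (induction q) (simp_all only: decode_state.simps assms measurable_decode_init measurable_decode_step)

lemma measurable_decode_bit:
  assumes "x \<in> M \<rightarrow>\<^sub>M borel" "y \<in> M \<rightarrow>\<^sub>M borel" "z \<in> M \<rightarrow>\<^sub>M borel"
  shows "Measurable.pred M (\<lambda>w. decode_bit (x w) (y w) (z w) q)"
proof -
  have "Measurable.pred M (\<lambda>w. let (_, py, pz, _) = decode_state (x w) (y w) (z w) q in y w py < z w pz)"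
    by (rule measurable_compose_countable[where f="\<lambda>st w. let (_, py, pz, _) = st in y w py < z w pz",
          OF _ measurable_decode_state[OF assms]])
      (unfold Let_def case_prod_beta,
       rule measurable_count_space_binop[OF measurable_baire_eval[OF assms(2) measurable_count_space_const]
         measurable_baire_eval[OF assms(3) measurable_count_space_const]])
  then show ?thesis
    by (simp add: decode_bit_def)
qed

lemma measurable_decode: "decode \<in> borel \<rightarrow>\<^sub>M borel"
proof (rule measurable_coordinatewise_then_product)
  fix k
  have "(\<lambda>w. LEAST i. decode_bit (fst w) (fst (snd w)) (snd (snd w)) (prod_encode (k, i)))
      \<in> borel \<Otimes>\<^sub>M borel \<Otimes>\<^sub>M borel \<rightarrow>\<^sub>M count_space UNIV"
    by (intro measurable_Least measurable_decode_bit measurable_fst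
        measurable_compose[OF measurable_snd measurable_fst] measurable_compose[OF measurable_snd measurable_snd])
  then show "(\<lambda>w. decode w k) \<in> borel \<rightarrow>\<^sub>M borel"
    by (simp add: measurable_borel_nat_iff decode_def case_prod_beta borel_prod)
qed

type_synonym construction_state = "nat list \<times> nat list \<times> nat list \<times> nat"

fun admissible :: "nat list set \<Rightarrow> construction_state \<Rightarrow> bool" where
  "admissible T (X, Y, Z, M) \<longleftrightarrow> splitting_node T X \<and> splitting_node T Y \<and> splitting_node T Z \<and>
     (\<forall>v \<in> set X \<union> set Y \<union> set Z. v \<le> M)"

lemma admissible_stem: "splitting_node T s \<Longrightarrow> sum_list s \<le> M \<Longrightarrow> admissible T (s, s, s, M)"
  using member_le_sum_list order_trans by fastforce

fun jump_round :: "nat list set \<Rightarrow> construction_state \<Rightarrow> construction_state" where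
  "jump_round T (X, Y, Z, M) =
     (let X' = jump T X M; M1 = M + sum_list X';
          Y' = jump T Y M1; M2 = M1 + sum_list Y';
          Z' = jump T Z M2
      in (X', Y', Z', M2 + sum_list Z'))"

lemma jump_round:
  assumes T: "superperfect_tree T" and adm: "admissible T (X, Y, Z, M)"
    and round: "jump_round T (X, Y, Z, M) = (X', Y', Z', M')"
  shows "admissible T (X', Y', Z', M')"
    and "strict_prefix X X'" "strict_prefix Y Y'" "strict_prefix Z Z'"
    and "M < X' ! length X"
    and "\<forall>v \<in> set X'. v < Y' ! length Y \<and> v < Z' ! length Z"
    and "Y' ! length Y < Z' ! length Z"
proof -
  have below_sum: "v \<in> set \<tau> \<Longrightarrow> v \<le> B + sum_list \<tau>" for v \<tau> and B :: nat
    by (simp add: member_le_sum_list trans_le_add2)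
  define M1 where "M1 = M + sum_list X'"
  define M2 where "M2 = M1 + sum_list Y'"
  have eqs: "X' = jump T X M" "Y' = jump T Y M1" "Z' = jump T Z M2" "M' = M2 + sum_list Z'"
    using round by (auto simp: M1_def M2_def Let_def)
  have X: "splitting_node T X'" "strict_prefix X X'" "M < X' ! length X"
    and Y: "splitting_node T Y'" "strict_prefix Y Y'" "M1 < Y' ! length Y"
    and Z: "splitting_node T Z'" "strict_prefix Z Z'" "M2 < Z' ! length Z"
    using adm jump[OF T] unfolding eqs by auto
  have bounds: "\<forall>v \<in> set X'. v \<le> M1" "\<forall>v \<in> set Y'. v \<le> M2" "\<forall>v \<in> set Z'. v \<le> M'"
    using below_sum unfolding M1_def M2_def eqs(4) by auto
  have mono: "M \<le> M1" "M1 \<le> M2" "M2 \<le> M'"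
    unfolding M1_def M2_def eqs(4) by auto
  have "Y' ! length Y \<le> M2"
    using bounds(2) prefix_length_less[OF Y(2)] by simp
  then show "Y' ! length Y < Z' ! length Z"
    using Z(3) by simp
  show "\<forall>v \<in> set X'. v < Y' ! length Y \<and> v < Z' ! length Z"
    using bounds(1) Y(3) Z(3) mono(2) by fastforce
  have "\<forall>v \<in> set X' \<union> set Y' \<union> set Z'. v \<le> M'"
    using bounds mono by fastforce
  then show "admissible T (X', Y', Z', M')"
    using X(1) Y(1) Z(1) by simp
  show "strict_prefix X X'" "strict_prefix Y Y'" "strict_prefix Z Z'" "M < X' ! length X"
    using X Y Z by simp_all
qed

fun block :: "nat list set \<Rightarrow> bool \<Rightarrow> construction_state \<Rightarrow> construction_state" where
  "block T True S = jump_round T S"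
| "block T False (X, Y, Z, M) = (let (X', Z', Y', M') = jump_round T (X, Z, Y, M) in (X', Y', Z', M'))"

lemma block:
  assumes T: "superperfect_tree T" and adm: "admissible T (X, Y, Z, M)"
    and blk: "block T b (X, Y, Z, M) = (X', Y', Z', M')"
  shows "admissible T (X', Y', Z', M') \<and> strict_prefix X X' \<and> strict_prefix Y Y' \<and> strict_prefix Z Z' \<and>
    M < X' ! length X \<and> (\<forall>v \<in> set X'. v < Y' ! length Y \<and> v < Z' ! length Z) \<and>
    (if b then Y' ! length Y < Z' ! length Z else Z' ! length Z < Y' ! length Y)"
proof (cases b)
  case True
  then have "jump_round T (X, Y, Z, M) = (X', Y', Z', M')"
    using blk by simp
  from jump_round[OF T adm this] True show ?thesis
    by simp
next
  case False
  have adm': "admissible T (X, Z, Y, M)"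
    using adm by auto
  have "jump_round T (X, Z, Y, M) = (X', Z', Y', M')"
    using blk False by (auto split: prod.splits)
  from jump_round[OF T adm' this] False show ?thesis
    by auto
qed

locale coding_construction =
  fixes T :: "nat list set" and s :: "nat list" and M0 :: nat and bits :: "nat \<Rightarrow> bool"
  assumes superperfect: "superperfect_tree T" and admissible_start: "admissible T (s, s, s, M0)"
begin

primrec stage :: "nat \<Rightarrow> construction_state" where
  "stage 0 = (s, s, s, M0)"
| "stage (Suc q) = block T (bits q) (stage q)"

definition "X q = fst (stage q)"
definition "Y q = fst (snd (stage q))"
definition "Z q = fst (snd (snd (stage q)))"
definition "M q = snd (snd (snd (stage q)))"

lemma stage_eq: "stage q = (X q, Y q, Z q, M q)"
  by (simp add: X_def Y_def Z_def M_def)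

lemma stage_0: "X 0 = s" "Y 0 = s" "Z 0 = s" "M 0 = M0"
  by (simp_all add: X_def Y_def Z_def M_def)

lemma block_stage: "block T (bits q) (X q, Y q, Z q, M q) = (X (Suc q), Y (Suc q), Z (Suc q), M (Suc q))"
  by (metis stage.simps(2) stage_eq)

lemma admissible_stage: "admissible T (X q, Y q, Z q, M q)"
proof (induction q)
  case 0
  then show ?case
    using admissible_start by (simp add: stage_0)
next
  case (Suc q)
  then show ?case
    using block[OF superperfect Suc block_stage] by simp
qed

lemma stage_Suc:
  shows "strict_prefix (X q) (X (Suc q))" "strict_prefix (Y q) (Y (Suc q))" "strict_prefix (Z q) (Z (Suc q))"
    and "M q < X (Suc q) ! length (X q)"
    and "\<forall>v \<in> set (X (Suc q)). v < Y (Suc q) ! length (Y q) \<and> v < Z (Suc q) ! length (Z q)"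
    and "if bits q then Y (Suc q) ! length (Y q) < Z (Suc q) ! length (Z q)
         else Z (Suc q) ! length (Z q) < Y (Suc q) ! length (Y q)"
  using block[OF superperfect admissible_stage block_stage] by blast+

definition "x = chain_limit X"
definition "y = chain_limit Y"
definition "z = chain_limit Z"

lemma nth_limits:
  shows "n < length (X q) \<Longrightarrow> x n = X q ! n"
    and "n < length (Y q) \<Longrightarrow> y n = Y q ! n"
    and "n < length (Z q) \<Longrightarrow> z n = Z q ! n"
  unfolding x_def y_def z_def by (rule chain_limit_nth, rule stage_Suc, assumption)+

lemma limits_in_branches: "x \<in> branches T" "y \<in> branches T" "z \<in> branches T"
proof -
  have tree: "is_tree T"
    using superperfect by (simp add: superperfect_tree_def)
  have mem: "X q \<in> T" "Y q \<in> T" "Z q \<in> T" for q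
    using admissible_stage[of q] by (simp_all add: splitting_node_def)
  show "x \<in> branches T"
    unfolding x_def using tree stage_Suc(1) mem(1) by (rule chain_limit_in_branches)
  show "y \<in> branches T"
    unfolding y_def using tree stage_Suc(2) mem(2) by (rule chain_limit_in_branches)
  show "z \<in> branches T"
    unfolding z_def using tree stage_Suc(3) mem(3) by (rule chain_limit_in_branches)
qed

lemma limits_le_bound:
  shows "n < length (X q) \<Longrightarrow> x n \<le> M q"
    and "n < length (Y q) \<Longrightarrow> y n \<le> M q"
    and "n < length (Z q) \<Longrightarrow> z n \<le> M q"
  using admissible_stage[of q] by (auto simp: nth_limits)

lemma length_stage_less: "length (X q) < length (X (Suc q))" "length (Y q) < length (Y (Suc q))"
    "length (Z q) < length (Z (Suc q))"
  by (simp_all add: prefix_length_less stage_Suc(1-3))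

lemma limits_at_jumps:
  shows "M q < x (length (X q))"
    and "n < length (X (Suc q)) \<Longrightarrow> x n < y (length (Y q)) \<and> x n < z (length (Z q))"
    and "if bits q then y (length (Y q)) < z (length (Z q)) else z (length (Z q)) < y (length (Y q))"
  using stage_Suc(4-6)[of q] length_stage_less[of q]
  by (auto simp: nth_limits[of _ "Suc q"])

definition "jump_state q = (length (X q), length (Y q), length (Z q), max (y (length (Y q))) (z (length (Z q))))"

lemma first_difference_limits: "(LEAST n. y n \<noteq> z n) = length s"
proof (rule Least_equality)
  show "y (length s) \<noteq> z (length s)"
    using limits_at_jumps(3)[of 0] by (auto simp: stage_0 split: if_splits)
  show "length s \<le> m" if "y m \<noteq> z m" for m
  proof (rule ccontr)
    assume "\<not> length s \<le> m"
    then have "y m = z m"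
      using nth_limits(2,3)[of m 0] by (simp add: stage_0)
    with that show False
      by simp
  qed
qed

lemma decode_step_jump_state: "decode_step x y z (jump_state q) = jump_state (Suc q)"
proof -
  define t where "t = max (y (length (Y q))) (z (length (Z q)))"
  define vx where "vx = x (length (X (Suc q)))"
  have "t \<le> M (Suc q)"
    using limits_le_bound(2,3)[of _ "Suc q"] length_stage_less[of q] by (simp add: t_def)
  then have "t < vx"
    using limits_at_jumps(1)[of "Suc q"] by (simp add: vx_def)
  moreover have "x n \<le> t" if "n < length (X (Suc q))" for n
    using limits_at_jumps(2)[OF that] by (auto simp: t_def le_max_iff_disj)
  ultimately have px: "(LEAST n. length (X q) < n \<and> t < x n) = length (X (Suc q))"
    using length_stage_less(1) by (intro Least_first_above) (simp_all add: vx_def)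
  have "M (Suc q) < vx"
    using limits_at_jumps(1)[of "Suc q"] by (simp add: vx_def)
  moreover have "vx < y (length (Y (Suc q)))" "vx < z (length (Z (Suc q)))"
    using limits_at_jumps(2)[of "length (X (Suc q))" "Suc q"] length_stage_less(1)[of "Suc q"]
    by (simp_all add: vx_def)
  ultimately have py: "(LEAST n. length (Y q) < n \<and> vx < y n) = length (Y (Suc q))"
    and pz: "(LEAST n. length (Z q) < n \<and> vx < z n) = length (Z (Suc q))"
    using length_stage_less(2,3) limits_le_bound(2,3)[of _ "Suc q"]
    by (intro Least_first_above; fastforce)+
  show ?thesis
    unfolding jump_state_def t_def[symmetric] decode_step_def prod.case Let_def px vx_def[symmetric] py pz
    by (rule refl)
qed

lemma decode_state_jump_state: "decode_state x y z q = jump_state q"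
proof (induction q)
  case 0
  show ?case
    by (simp add: decode_init_def Let_def jump_state_def stage_0 first_difference_limits)
next
  case (Suc q)
  then show ?case
    by (simp add: decode_step_jump_state)
qed

lemma decode_bit_limits: "decode_bit x y z = bits"
proof
  show "decode_bit x y z q = bits q" for q
    using limits_at_jumps(3)[of q]
    by (auto simp: decode_bit_def decode_state_jump_state jump_state_def split: if_splits)
qed

lemma limits_above_start: "M0 < x (length s)" "M0 < y (length s)" "M0 < z (length s)"
  using limits_at_jumps(1)[of 0] limits_at_jumps(2)[of "length s" 0] length_stage_less(1)[of 0]
  by (auto simp: stage_0)

end

lemma superperfect_tree_has_branch:
  assumes "superperfect_tree T"
  obtains a where "a \<in> branches T"
proof -
  obtain s where "splitting_node T s"
    using assms by (rule superperfect_tree_ex_splitting_node)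
  then interpret coding_construction T s "sum_list s" "\<lambda>_. True"
    by (intro coding_construction.intro assms admissible_stem) simp_all
  show ?thesis
    using limits_in_branches(1) by (rule that)
qed

theorem proposition5p4:
  shows "\<exists>f :: (nat \<Rightarrow> nat) \<times> (nat \<Rightarrow> nat) \<times> (nat \<Rightarrow> nat) \<Rightarrow> (nat \<Rightarrow> nat).
           f \<in> borel \<rightarrow>\<^sub>M borel \<and> (\<forall>A. superperfect_set A \<longrightarrow> \<not> free_for A f)"
proof (intro exI conjI allI impI)
  show "decode \<in> borel \<rightarrow>\<^sub>M borel"
    by (rule measurable_decode)
  fix A
  assume "superperfect_set A"
  then obtain T where T: "superperfect_tree T" and A: "A = branches T"
    unfolding superperfect_set_def by blast
  obtain a where a: "a \<in> branches T"
    using T by (rule superperfect_tree_has_branch)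
  obtain s where s: "splitting_node T s"
    using T by (rule superperfect_tree_ex_splitting_node)
  interpret c: coding_construction T s "a (length s) + sum_list s" "graph_code a"
    by (intro coding_construction.intro T admissible_stem[OF s]) simp
  have xyz: "c.x \<in> A" "c.y \<in> A" "c.z \<in> A"
    using c.limits_in_branches by (simp_all add: A)
  have "a (length s) < c.x (length s)" "a (length s) < c.y (length s)" "a (length s) < c.z (length s)"
    using c.limits_above_start by simp_all
  then have "a \<notin> {c.x, c.y, c.z}"
    by auto
  moreover have "decode (c.x, c.y, c.z) = a"
    by (rule decode_eq_if_graph_code[OF c.decode_bit_limits])
  ultimately have "decode (c.x, c.y, c.z) \<notin> {c.x, c.y, c.z} \<union> (UNIV - A)"
    using a A by simp
  with xyz show "\<not> free_for A decode"
    unfolding free_for_def by blast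
qed

end
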